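(* Let $H$ be a monoid and let $X\subseteq\mathrm{Gpr}\,H$. Assume that $X$ has a least common multiple $l$ in $H$. Then $l\in\mathrm{Gpr}\,H$.
   Context: A monoid means a commutative cancellative monoid (written multiplicatively). An element $r\in H$ is a radical generator if the principal ideal $rH$ is radical, i.e. for all $b\in H$ and $n\in\mathbb{N}$, $r\mid b^n$ implies $r\mid b$; $\mathrm{Gpr}\,H$ is the set of radical generators of $H$. A least common multiple of $X$ is an element $l\in H$ such that $x\mid l$ for all $x\in X$, and $l\mid h$ for every $h\in H$ divisible by all elements of $X$. *)

theory Defs
  imports Main
begin

text \<open>The monoid H is modelled as the whole carrier of a type of class comm_monoid_mult;
  cancellativity is stated as an explicit hypothesis.\<close>

definition cancellative :: "'a::comm_monoid_mult itself \<Rightarrow> bool" where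
  "cancellative _ \<longleftrightarrow> (\<forall>a b c :: 'a. a * c = b * c \<longrightarrow> a = b)"

definition radical_generator :: "'a::comm_monoid_mult \<Rightarrow> bool" where
  "radical_generator r \<longleftrightarrow> (\<forall>b (n::nat). n \<ge> 1 \<longrightarrow> r dvd b ^ n \<longrightarrow> r dvd b)"

definition Gpr :: "'a::comm_monoid_mult set" where
  "Gpr = {r. radical_generator r}"

definition is_lcm_of :: "'a::comm_monoid_mult set \<Rightarrow> 'a \<Rightarrow> bool" where
  "is_lcm_of X l \<longleftrightarrow> (\<forall>x\<in>X. x dvd l) \<and> (\<forall>h. (\<forall>x\<in>X. x dvd h) \<longrightarrow> l dvd h)"

end

theory Submission
  imports Defs
begin

lemma radical_generatorD:
  assumes "radical_generator r" and "n \<ge> 1" and "r dvd b ^ n"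
  shows "r dvd b"
  using assms unfolding radical_generator_def by blast

lemma radical_generatorI:
  assumes "\<And>b n. n \<ge> 1 \<Longrightarrow> r dvd b ^ n \<Longrightarrow> r dvd b"
  shows "radical_generator r"
  using assms unfolding radical_generator_def by blast

lemma is_lcm_of_dvd:
  assumes "is_lcm_of X l" and "x \<in> X"
  shows "x dvd l"
  using assms unfolding is_lcm_of_def by blast

lemma is_lcm_of_least:
  assumes "is_lcm_of X l" and "\<And>x. x \<in> X \<Longrightarrow> x dvd h"
  shows "l dvd h"
  using assms unfolding is_lcm_of_def by blast

lemma radical_generator_lcm:
  assumes radical: "\<And>x. x \<in> X \<Longrightarrow> radical_generator x"
    and lcm: "is_lcm_of X l"
  shows "radical_generator l"
proof (rule radical_generatorI)
  fix b :: 'a and n :: nat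
  assume n: "n \<ge> 1" and l_dvd: "l dvd b ^ n"
  have "x dvd b" if x: "x \<in> X" for x
  proof (rule radical_generatorD[OF radical[OF x] n])
    show "x dvd b ^ n"
      using is_lcm_of_dvd[OF lcm x] l_dvd by (rule dvd_trans)
  qed
  then show "l dvd b"
    using lcm by (rule is_lcm_of_least[rotated])
qed

theorem lemma2p6:
  fixes X :: "'a::comm_monoid_mult set" and l :: 'a
  assumes "cancellative TYPE('a)"
    and "X \<subseteq> Gpr"
    and "is_lcm_of X l"
  shows "l \<in> Gpr"
  using assms(2,3) radical_generator_lcm unfolding Gpr_def by blast

end
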